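(* Let $G$ be a complete split graph with vertex set $Q'\cup S'$ (disjoint), where $|Q'|\geq 1$, $|S'|\geq 2$, $Q'$ is a clique, $S'$ is a stable set, and every vertex of $Q'$ is adjacent to every vertex of $S'$. Then $\eta(G)=|Q'|$.
   Context: All graphs are finite, simple and undirected. For a vertex $v$, $N(v)$ is its set of neighbours. For a positive integer $k$, $[k]=\{1,\dots,k\}$. For a labeling $f:V(G)\to[k]$ and $S\subseteq V(G)$, $f(S)=\sum_{u\in S}f(u)$. A labeling $f:V(G)\to[k]$ is an additive $k$-coloring if $f(N(u))\neq f(N(v))$ for every edge $(u,v)$ of $G$. The additive chromatic number $\eta(G)$ is the least $k$ for which $G$ has an additive $k$-coloring. *)

theory Defs
  imports Main
begin

definition simple_graph :: "'a set \<Rightarrow> ('a \<Rightarrow> 'a \<Rightarrow> bool) \<Rightarrow> bool" where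
  "simple_graph V E \<longleftrightarrow> finite V \<and>
     (\<forall>u v. E u v \<longrightarrow> u \<in> V \<and> v \<in> V) \<and>
     (\<forall>u v. E u v \<longrightarrow> E v u) \<and> (\<forall>v. \<not> E v v)"

definition nbhd :: "'a set \<Rightarrow> ('a \<Rightarrow> 'a \<Rightarrow> bool) \<Rightarrow> 'a \<Rightarrow> 'a set" where
  "nbhd V E v = {u \<in> V. E v u}"

definition additive_coloring :: "'a set \<Rightarrow> ('a \<Rightarrow> 'a \<Rightarrow> bool) \<Rightarrow> nat \<Rightarrow> ('a \<Rightarrow> nat) \<Rightarrow> bool" where
  "additive_coloring V E k f \<longleftrightarrow>
     (\<forall>v\<in>V. f v \<in> {1..k}) \<and>
     (\<forall>u\<in>V. \<forall>v\<in>V. E u v \<longrightarrow> sum f (nbhd V E u) \<noteq> sum f (nbhd V E v))"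

definition additive_chromatic_number :: "'a set \<Rightarrow> ('a \<Rightarrow> 'a \<Rightarrow> bool) \<Rightarrow> nat" where
  "additive_chromatic_number V E = (LEAST k. k \<ge> 1 \<and> (\<exists>f. additive_coloring V E k f))"

end

theory Submission
  imports Defs
begin

text \<open>A vertex u adjacent to all other vertices has neighbourhood sum (\<Sum>V) - f u, so an additive
 coloring must give distinct labels to any two such vertices: the clique Q already forces card Q
 labels. Conversely, label Q bijectively by 1, ..., card Q and every vertex of S by card Q. Two
 vertices of Q then have distinct neighbourhood sums, while for u \<in> Q and v \<in> S the sum at u
 exceeds the sum f(Q) at v by at least f(S) - f u \<ge> (card S - 1) card Q > 0.\<close>

lemma sum_nbhd_universal:
  assumes "finite V" "u \<in> V" "nbhd V E u = V - {u}"
  shows "sum f (nbhd V E u) + f u = sum f V"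
  using assms sum.remove[OF assms(1,2), of f] by (simp add: add.commute)

lemma additive_coloring_inj_on_universal:
  assumes "finite V" "additive_coloring V E k f"
    and "U \<subseteq> V" "\<And>u. u \<in> U \<Longrightarrow> nbhd V E u = V - {u}"
  shows "inj_on f U"
proof (rule inj_onI, rule ccontr)
  fix u v assume uv: "u \<in> U" "v \<in> U" "f u = f v" "u \<noteq> v"
  have "E u v" using uv assms(3) assms(4)[OF uv(1)] unfolding nbhd_def by blast
  then have "sum f (nbhd V E u) \<noteq> sum f (nbhd V E v)"
    using assms(2,3) uv unfolding additive_coloring_def by blast
  moreover have "sum f (nbhd V E u) + f u = sum f (nbhd V E v) + f v"
    using sum_nbhd_universal[OF assms(1) _ assms(4)] assms(3) uv(1,2) by (metis subsetD)
  ultimately show False using uv(3) by simp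
qed

lemma additive_coloring_card_universal_le:
  assumes "finite V" "additive_coloring V E k f"
    and "U \<subseteq> V" "\<And>u. u \<in> U \<Longrightarrow> nbhd V E u = V - {u}"
  shows "card U \<le> k"
proof -
  have "f ` U \<subseteq> {1..k}" using assms(2,3) unfolding additive_coloring_def by auto
  then have "card (f ` U) \<le> k" using card_mono[of "{1..k}"] by fastforce
  then show ?thesis
    using card_image[OF additive_coloring_inj_on_universal[OF assms]] by simp
qed

lemma additive_chromatic_number_eqI:
  assumes "1 \<le> k" "additive_coloring V E k f"
    and "\<And>k' f'. additive_coloring V E k' f' \<Longrightarrow> k \<le> k'"
  shows "additive_chromatic_number V E = k"
  unfolding additive_chromatic_number_def using assms by (intro Least_equality) blast+

locale complete_split_graph =
  fixes Q S :: "'a set" and E :: "'a \<Rightarrow> 'a \<Rightarrow> bool"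
  assumes simple: "simple_graph (Q \<union> S) E"
    and disjoint: "Q \<inter> S = {}"
    and clique: "\<forall>u\<in>Q. \<forall>v\<in>Q. u \<noteq> v \<longrightarrow> E u v"
    and stable: "\<forall>u\<in>S. \<forall>v\<in>S. \<not> E u v"
    and join: "\<forall>u\<in>Q. \<forall>v\<in>S. E u v"
begin

lemma finite_Q: "finite Q" and finite_S: "finite S"
  using simple unfolding simple_graph_def by auto

lemma nbhd_clique: "u \<in> Q \<Longrightarrow> nbhd (Q \<union> S) E u = Q \<union> S - {u}"
  using clique join simple unfolding nbhd_def simple_graph_def by auto

lemma nbhd_stable: "v \<in> S \<Longrightarrow> nbhd (Q \<union> S) E v = Q"
  using join stable simple unfolding nbhd_def simple_graph_def by blast

lemma card_le_additive_coloring: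
  "additive_coloring (Q \<union> S) E k f \<Longrightarrow> card Q \<le> k"
  using finite_Q finite_S nbhd_clique
  by (intro additive_coloring_card_universal_le[of "Q \<union> S" E k f Q]) auto

lemma ex_additive_coloring_card:
  assumes "Q \<noteq> {}" "2 \<le> card S"
  shows "\<exists>f. additive_coloring (Q \<union> S) E (card Q) f"
proof -
  have "\<exists>g. bij_betw g Q {1..card Q}"
    using finite_Q by (intro finite_same_card_bij) auto
  then obtain g where g: "bij_betw g Q {1..card Q}" ..
  define f where "f x = (if x \<in> Q then g x else card Q)" for x
  have card_Q: "1 \<le> card Q" using assms(1) finite_Q by (simp add: Suc_le_eq card_gt_0_iff)
  have f_range: "f x \<in> {1..card Q}" if "x \<in> Q \<union> S" for x
  proof (cases "x \<in> Q")
    case True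
    then show ?thesis using bij_betw_apply[OF g True] unfolding f_def by simp
  next
    case False
    then show ?thesis using card_Q unfolding f_def by simp
  qed
  have "sum f S = sum (\<lambda>_. card Q) S"
    using disjoint by (intro sum.cong) (auto simp: f_def)
  then have sum_S: "2 * card Q \<le> sum f S" using assms(2) by simp
  have sum_clique: "sum f (nbhd (Q \<union> S) E u) + f u = sum f Q + sum f S" if "u \<in> Q" for u
    using sum_nbhd_universal[OF _ _ nbhd_clique[OF that], of f] that finite_Q finite_S
      sum.union_disjoint[OF finite_Q finite_S disjoint, of f] by simp
  have clique_stable: "sum f (nbhd (Q \<union> S) E u) \<noteq> sum f (nbhd (Q \<union> S) E v)"
    if "u \<in> Q" "v \<in> S" for u v
  proof -
    have "f u \<le> card Q" using f_range[of u] that(1) by simp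
    then have "sum f Q < sum f (nbhd (Q \<union> S) E u)"
      using sum_clique[OF that(1)] sum_S card_Q by linarith
    then show ?thesis using nbhd_stable[OF that(2)] by simp
  qed
  have "sum f (nbhd (Q \<union> S) E u) \<noteq> sum f (nbhd (Q \<union> S) E v)"
    if uv: "u \<in> Q \<union> S" "v \<in> Q \<union> S" "E u v" for u v
  proof -
    consider "u \<in> Q" "v \<in> Q" | "u \<in> Q" "v \<in> S" | "u \<in> S" "v \<in> Q"
      using uv stable by blast
    then show ?thesis
    proof cases
      case 1
      have "u \<noteq> v" using uv(3) simple unfolding simple_graph_def by blast
      then have "f u \<noteq> f v"
        using 1 bij_betw_imp_inj_on[OF g] unfolding f_def by (auto dest: inj_onD)
      then show ?thesis using sum_clique[OF 1(1)] sum_clique[OF 1(2)] by linarith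
    next
      case 2
      then show ?thesis using clique_stable by blast
    next
      case 3
      then show ?thesis using clique_stable by metis
    qed
  qed
  then show ?thesis
    using f_range unfolding additive_coloring_def by blast
qed

end

theorem mainTheorem11:
  fixes Q S :: "'a set" and E :: "'a \<Rightarrow> 'a \<Rightarrow> bool"
  assumes "simple_graph (Q \<union> S) E"
    and "Q \<inter> S = {}"
    and "card Q \<ge> 1" and "card S \<ge> 2"
    and "\<forall>u\<in>Q. \<forall>v\<in>Q. u \<noteq> v \<longrightarrow> E u v"
    and "\<forall>u\<in>S. \<forall>v\<in>S. \<not> E u v"
    and "\<forall>u\<in>Q. \<forall>v\<in>S. E u v"
  shows "additive_chromatic_number (Q \<union> S) E = card Q"
proof -
  interpret complete_split_graph Q S E
    using assms by unfold_locales
  have "Q \<noteq> {}" using assms(3) by auto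
  then obtain f where "additive_coloring (Q \<union> S) E (card Q) f"
    using ex_additive_coloring_card assms(4) by blast
  then show ?thesis
    using assms(3) card_le_additive_coloring by (intro additive_chromatic_number_eqI)
qed

end
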